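(* Let the data $(I,1,c,\{h_a\},S,\{d_a\},\{\chi_a\})$ be as in the context, fix $a\in I$ and an integer $n\ge1$. For $x,y>0$ define $$\mathcal{T}_a(n;x,y)=\frac{\chi_a\!\left(ix+\tfrac1n\right)\,\chi_a\!\left(iy-\tfrac1n\right)}{\chi_a(ix)\,\chi_a(iy)},\qquad \zeta_{n,a}:=\sum_{b\in I}S_{ab}\,d_b\,\theta_b^n .$$ Assume $\zeta_{n,a}\neq0$. Then as $x\to\infty$ and $y\to0^+$ (independently), $\mathcal{T}_a(n;x,y)\ne 0$ eventually and $$\frac{\mathcal{T}_a(n;x,y)}{|\mathcal{T}_a(n;x,y)|}\;\longrightarrow\;e^{\frac{2\pi i}{n}h_a-2\pi i\left(\frac2n+n\right)\frac{c}{24}}\;\frac{\zeta_{n,a}}{|\zeta_{n,a}|},$$ i.e. $\mathcal{T}_a(n;x,y)$ is asymptotically a positive real multiple of $e^{\frac{2\pi i}{n}h_a-2\pi i(\frac2n+n)\frac{c}{24}}\,\zeta_{n,a}$.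
   Context: Data: $I$ is a finite index set with a distinguished element $1$. $c\in\mathbb{R}$. Real numbers $h_a$ ($a\in I$) with $h_1=0$ and $h_a>0$ for $a\neq 1$; set $\theta_a=e^{2\pi i h_a}$. Positive reals $d_a$ ($a\in I$) and $\mathcal{D}=\sqrt{\sum_a d_a^2}$. $S=(S_{ab})_{a,b\in I}$ is a complex matrix with $S_{a1}=S_{1a}=d_a/\mathcal{D}$ for all $a$. The functions $\chi_a$ ($a\in I$) are holomorphic on the upper half-plane $\mathbb{H}$ and have absolutely convergent expansions $\chi_a(\tau)=\sum_{k\ge 0}N_{a,k}\,e^{2\pi i\tau(h_a-c/24+k)}$ with nonnegative integers $N_{a,k}$, $N_{a,0}\ge1$ and $N_{1,0}=1$; they satisfy the modular covariance $\chi_a(-1/\tau)=\sum_b S_{ab}\chi_b(\tau)$ and $\chi_a(\tau+1)=e^{2\pi i(h_a-c/24)}\chi_a(\tau)$ for all $\tau\in\mathbb{H}$. For $a=1$ one has $\zeta_{n,1}=\mathcal{D}^{-1}\sum_b d_b^2\theta_b^n$. *)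

theory Defs
  imports "HOL-Analysis.Analysis"
begin

definition theta :: "('i \<Rightarrow> real) \<Rightarrow> 'i \<Rightarrow> complex" where
  "theta h a = exp (2 * of_real pi * \<i> * of_real (h a))"

definition zeta :: "'i set \<Rightarrow> ('i \<Rightarrow> 'i \<Rightarrow> complex) \<Rightarrow> ('i \<Rightarrow> real) \<Rightarrow> ('i \<Rightarrow> real)
                    \<Rightarrow> nat \<Rightarrow> 'i \<Rightarrow> complex" where
  "zeta I S d h n a = (\<Sum>b\<in>I. S a b * of_real (d b) * theta h b ^ n)"

definition Tfun :: "('i \<Rightarrow> complex \<Rightarrow> complex) \<Rightarrow> 'i \<Rightarrow> nat \<Rightarrow> real \<Rightarrow> real \<Rightarrow> complex" where
  "Tfun chi a n x y =
     chi a (\<i> * of_real x + 1 / of_nat n) * chi a (\<i> * of_real y - 1 / of_nat n)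
     / (chi a (\<i> * of_real x) * chi a (\<i> * of_real y))"

end

theory Submission
  imports Defs
begin

(*
  Each character factors as chi_b(tau) = e^(2 pi i tau (h_b - c/24)) F_b(e^(2 pi i tau)) with a
  power series F_b satisfying F_b(0) = N_b0. As x -> oo this gives
  chi_a(ix + 1/n) / chi_a(ix) -> e^(2 pi i (h_a - c/24) / n).
  For y -> 0+, one has iy = S(i/y) and iy - 1/n = S T^n S (u) with u = 1/n + i/(n^2 y), so
  chi_a(iy) and chi_a(iy - 1/n) become linear combinations of characters at points of large
  imaginary part t. After dividing by the common real growth factor e^(2 pi t c/24) only the
  vacuum term survives, because h_b > 0 for b <> 1, and the vacuum coefficient of S T^n S is
  zeta_{n,a} up to a phase. Hence T_a(n;x,y) is a positive real multiple of a quantity that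
  converges to a nonzero multiple of the claimed phase times zeta_{n,a}.
*)

definition qseries :: "(nat \<Rightarrow> nat) \<Rightarrow> complex \<Rightarrow> complex" where
  "qseries Nb q = (\<Sum>k. of_nat (Nb k) * q ^ k)"

lemma sums_q_expansion:
  assumes "(\<lambda>k. of_nat (Nb k) * exp (2 * of_real pi * \<i> * \<tau> * of_real (e + real k))) sums X"
  shows "X = exp (2 * of_real pi * \<i> * \<tau> * of_real e) * qseries Nb (exp (2 * of_real pi * \<i> * \<tau>))"
proof -
  define E where "E = exp (2 * of_real pi * \<i> * \<tau> * of_real e)"
  have "E \<noteq> 0" by (simp add: E_def)
  have term_eq: "of_nat (Nb k) * exp (2 * of_real pi * \<i> * \<tau> * of_real (e + real k))
      = E * (of_nat (Nb k) * exp (2 * of_real pi * \<i> * \<tau>) ^ k)" for k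
    by (simp add: E_def exp_of_nat_mult[symmetric] mult_exp_exp[symmetric] algebra_simps)
  from assms[unfolded term_eq]
  have "(\<lambda>k. E * (of_nat (Nb k) * exp (2 * of_real pi * \<i> * \<tau>) ^ k)) sums (E * (X / E))"
    using \<open>E \<noteq> 0\<close> by simp
  then have "(\<lambda>k. of_nat (Nb k) * exp (2 * of_real pi * \<i> * \<tau>) ^ k) sums (X / E)"
    using \<open>E \<noteq> 0\<close> sums_mult_iff by blast
  then show ?thesis
    unfolding qseries_def using \<open>E \<noteq> 0\<close> by (simp add: sums_unique[symmetric] E_def)
qed

lemma qseries_tendsto:
  assumes "summable (\<lambda>k. real (Nb k) * r ^ k)" and "0 < r" and "(q \<longlongrightarrow> 0) F"
  shows "((\<lambda>t. qseries Nb (q t)) \<longlongrightarrow> of_nat (Nb 0)) F"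
proof -
  have "summable (\<lambda>k. of_nat (Nb k) * complex_of_real r ^ k)"
    using assms(1) by (simp flip: summable_complex_of_real)
  then have "isCont (qseries Nb) 0"
    unfolding qseries_def by (rule isCont_powser) (use \<open>0 < r\<close> in simp)
  with assms(3) show ?thesis
    using isCont_tendsto_compose by (fastforce simp: qseries_def)
qed

lemma exp_2pi_i_tendsto_0:
  assumes "filterlim (\<lambda>t. Im (\<tau> t)) at_top F"
  shows "((\<lambda>t. exp (2 * of_real pi * \<i> * \<tau> t)) \<longlongrightarrow> 0) F"
proof -
  have "filterlim (\<lambda>t. 2 * pi * Im (\<tau> t)) at_top F"
    by (rule filterlim_tendsto_pos_mult_at_top[OF tendsto_const _ assms]) simp
  then have "filterlim (\<lambda>t. - (2 * pi * Im (\<tau> t))) at_bot F"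
    by (simp add: filterlim_uminus_at_top)
  then have "((\<lambda>t. exp (- (2 * pi * Im (\<tau> t)))) \<longlongrightarrow> 0) F"
    by (rule filterlim_compose[OF exp_at_bot])
  then show ?thesis
    by (subst tendsto_norm_zero_iff[symmetric]) (simp add: norm_exp_eq_Re)
qed

lemma q_expansion_tendsto:
  fixes f :: "complex \<Rightarrow> complex"
  assumes sums: "\<And>\<tau>. 0 < Im \<tau> \<Longrightarrow>
      (\<lambda>k. of_nat (Nb k) * exp (2 * of_real pi * \<i> * \<tau> * of_real (e + real k))) sums f \<tau>"
    and abs_i: "summable (\<lambda>k. norm (of_nat (Nb k) * exp (2 * of_real pi * \<i> * \<i> * of_real (e + real k))))"
    and r: "filterlim r at_top F"
  shows "((\<lambda>t. f (of_real s + \<i> * of_real (r t)) * of_real (exp (2 * pi * e * r t)))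
           \<longlongrightarrow> exp (2 * of_real pi * \<i> * of_real s * of_real e) * of_nat (Nb 0)) F"
proof -
  define \<tau> where "\<tau> t = of_real s + \<i> * of_real (r t)" for t
  have "norm (of_nat (Nb k) * exp (2 * of_real pi * \<i> * \<i> * of_real (e + real k)))
      = exp (- 2 * pi * e) * (real (Nb k) * exp (- 2 * pi) ^ k)" for k
    by (simp add: norm_mult norm_exp_eq_Re exp_of_nat_mult[symmetric] mult_exp_exp algebra_simps)
  with abs_i have "summable (\<lambda>k. exp (- 2 * pi * e) * (real (Nb k) * exp (- 2 * pi) ^ k))"
    by simp
  then have "summable (\<lambda>k. real (Nb k) * exp (- 2 * pi) ^ k)"
    by (simp add: summable_cmult_iff)
  moreover have "filterlim (\<lambda>t. Im (\<tau> t)) at_top F"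
    using r by (simp add: \<tau>_def)
  ultimately have lim: "((\<lambda>t. qseries Nb (exp (2 * of_real pi * \<i> * \<tau> t))) \<longlongrightarrow> of_nat (Nb 0)) F"
    by (intro qseries_tendsto exp_2pi_i_tendsto_0) auto
  have "\<forall>\<^sub>F t in F. 0 < r t"
    using r by (simp add: filterlim_at_top_dense)
  then have "\<forall>\<^sub>F t in F. exp (2 * of_real pi * \<i> * of_real s * of_real e) * qseries Nb (exp (2 * of_real pi * \<i> * \<tau> t))
      = f (\<tau> t) * of_real (exp (2 * pi * e * r t))"
  proof eventually_elim
    case (elim t)
    then have "f (\<tau> t) = exp (2 * of_real pi * \<i> * \<tau> t * of_real e) * qseries Nb (exp (2 * of_real pi * \<i> * \<tau> t))"
      by (intro sums_q_expansion sums) (simp add: \<tau>_def)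
    moreover have "exp (2 * of_real pi * \<i> * \<tau> t * of_real e) * of_real (exp (2 * pi * e * r t))
        = exp (2 * of_real pi * \<i> * of_real s * of_real e)"
      by (simp add: \<tau>_def exp_of_real[symmetric] mult_exp_exp algebra_simps)
    ultimately show ?case by (simp add: algebra_simps)
  qed
  then show ?thesis
    unfolding \<tau>_def[symmetric] by (rule Lim_transform_eventually[OF tendsto_mult_left[OF lim], simplified])
qed

lemma tendsto_sgn_of_pos_scaling:
  fixes f :: "'a \<Rightarrow> 'b::real_normed_vector"
  assumes lim: "((\<lambda>t. p t *\<^sub>R f t) \<longlongrightarrow> L) F" and "L \<noteq> 0" and pos: "\<forall>\<^sub>F t in F. 0 < p t"
  shows "\<forall>\<^sub>F t in F. f t \<noteq> 0" and "((\<lambda>t. sgn (f t)) \<longlongrightarrow> sgn L) F"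
proof -
  show "\<forall>\<^sub>F t in F. f t \<noteq> 0"
    using tendsto_imp_eventually_ne[OF lim \<open>L \<noteq> 0\<close>] by eventually_elim auto
  have "\<forall>\<^sub>F t in F. sgn (p t *\<^sub>R f t) = sgn (f t)"
    using pos by eventually_elim (simp add: sgn_scaleR)
  then show "((\<lambda>t. sgn (f t)) \<longlongrightarrow> sgn L) F"
    using tendsto_sgn[OF lim \<open>L \<noteq> 0\<close>] by (rule Lim_transform_eventually[rotated])
qed

lemma inversion_translate_eq:
  fixes n :: nat and y :: real
  assumes "0 < n" and "0 < y"
  shows "- 1 / (- 1 / (of_real (1 / real n) + \<i> * of_real (1 / (real n ^ 2 * y))) + of_nat n)
       = \<i> * of_real y - of_real (1 / real n)"
proof -
  define u where "u = of_real (1 / real n) + \<i> * of_real (1 / (real n ^ 2 * y))"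
  have "u \<noteq> 0" and "\<i> * of_nat n + of_nat n * (of_nat n * of_real y) \<noteq> (0 :: complex)"
    using assms by (auto simp: u_def complex_eq_iff)
  then have "(- 1 / u + of_nat n) * (\<i> * of_real y - of_real (1 / real n)) = - 1"
    using assms unfolding u_def by (simp add: field_simps power2_eq_square)
  then show ?thesis
    unfolding u_def[symmetric] by (metis divide_eq_eq minus_mult_minus mult.commute mult_minus1_right neg_0_equal_iff_equal mult_zero_left zero_neq_one)
qed

lemma twisted_vacuum_coefficient_eq_zeta:
  assumes "\<And>b. b \<in> I \<Longrightarrow> S b one = of_real (d b / \<D>)"
  shows "(\<Sum>j\<in>I. S a j * exp (2 * of_real pi * \<i> * of_real (h j - c / 24)) ^ n * S j one)
       = exp (- 2 * of_real pi * \<i> * of_real (c / 24)) ^ n / of_real \<D> * zeta I S d h n a"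
proof -
  have "exp (2 * of_real pi * \<i> * of_real (h j - c / 24))
      = theta h j * exp (- 2 * of_real pi * \<i> * of_real (c / 24))" for j
    unfolding theta_def by (simp add: mult_exp_exp algebra_simps)
  then show ?thesis
    unfolding zeta_def sum_distrib_left
    by (intro sum.cong) (simp_all add: assms power_mult_distrib field_simps)
qed

locale modular_characters =
  fixes I :: "'i set" and one :: 'i and c :: real and h :: "'i \<Rightarrow> real"
    and S :: "'i \<Rightarrow> 'i \<Rightarrow> complex" and chi :: "'i \<Rightarrow> complex \<Rightarrow> complex"
    and N :: "'i \<Rightarrow> nat \<Rightarrow> nat"
  assumes finite_I: "finite I" and one_in_I: "one \<in> I"
    and h_one: "h one = 0"
    and h_pos: "\<And>b. b \<in> I \<Longrightarrow> b \<noteq> one \<Longrightarrow> h b > 0"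
    and chi_abs: "\<And>b \<tau>. b \<in> I \<Longrightarrow> 0 < Im \<tau> \<Longrightarrow>
        summable (\<lambda>k. norm (of_nat (N b k) *
           exp (2 * of_real pi * \<i> * \<tau> * of_real (h b - c / 24 + real k))))"
    and chi_exp: "\<And>b \<tau>. b \<in> I \<Longrightarrow> 0 < Im \<tau> \<Longrightarrow>
        (\<lambda>k. of_nat (N b k) *
           exp (2 * of_real pi * \<i> * \<tau> * of_real (h b - c / 24 + real k))) sums chi b \<tau>"
    and N_pos: "\<And>b. b \<in> I \<Longrightarrow> N b 0 \<ge> 1"
    and N_one: "N one 0 = 1"
    and S_trans: "\<And>b \<tau>. b \<in> I \<Longrightarrow> 0 < Im \<tau> \<Longrightarrow>
        chi b (- 1 / \<tau>) = (\<Sum>b'\<in>I. S b b' * chi b' \<tau>)"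
    and T_trans: "\<And>b \<tau>. b \<in> I \<Longrightarrow> 0 < Im \<tau> \<Longrightarrow>
        chi b (\<tau> + 1) = exp (2 * of_real pi * \<i> * of_real (h b - c / 24)) * chi b \<tau>"
begin

lemma chi_tendsto:
  assumes "j \<in> I" and "filterlim r at_top F"
  shows "((\<lambda>t. chi j (of_real s + \<i> * of_real (r t)) * of_real (exp (2 * pi * (h j - c / 24) * r t)))
           \<longlongrightarrow> exp (2 * of_real pi * \<i> * of_real s * of_real (h j - c / 24)) * of_nat (N j 0)) F"
  using q_expansion_tendsto[OF chi_exp chi_abs[of _ \<i>] assms(2)] assms(1) by simp

lemma vacuum_weight_tendsto:
  assumes "j \<in> I" and "filterlim r at_top F"
  shows "((\<lambda>t. exp (- 2 * pi * h j * r t)) \<longlongrightarrow> (if j = one then 1 else 0)) F"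
proof (cases "j = one")
  case False
  then have "filterlim (\<lambda>t. 2 * pi * h j * r t) at_top F"
    using h_pos[OF assms(1)] by (intro filterlim_tendsto_pos_mult_at_top[OF tendsto_const _ assms(2)]) simp
  then have "filterlim (\<lambda>t. - 2 * pi * h j * r t) at_bot F"
    by (simp add: filterlim_uminus_at_top)
  with False show ?thesis
    by (simp add: filterlim_compose[OF exp_at_bot])
qed (simp add: h_one)

lemma chi_sum_tendsto:
  assumes "filterlim r at_top F"
  shows "((\<lambda>t. (\<Sum>j\<in>I. v j * chi j (of_real s + \<i> * of_real (r t))) * of_real (exp (- 2 * pi * (c / 24) * r t)))
           \<longlongrightarrow> v one * exp (2 * of_real pi * \<i> * of_real s * of_real (- c / 24))) F"
proof -
  have "(\<Sum>j\<in>I. v j * chi j (of_real s + \<i> * of_real (r t))) * of_real (exp (- 2 * pi * (c / 24) * r t))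
      = (\<Sum>j\<in>I. v j * (chi j (of_real s + \<i> * of_real (r t)) * of_real (exp (2 * pi * (h j - c / 24) * r t)))
                    * of_real (exp (- 2 * pi * h j * r t)))" for t
    unfolding sum_distrib_right
    by (intro sum.cong refl) (simp add: mult_exp_exp algebra_simps flip: of_real_mult)
  moreover have "((\<lambda>t. \<Sum>j\<in>I. v j * (chi j (of_real s + \<i> * of_real (r t)) * of_real (exp (2 * pi * (h j - c / 24) * r t)))
                    * of_real (exp (- 2 * pi * h j * r t)))
      \<longlongrightarrow> (\<Sum>j\<in>I. v j * (exp (2 * of_real pi * \<i> * of_real s * of_real (h j - c / 24)) * of_nat (N j 0))
                    * of_real (if j = one then 1 else 0))) F"
    by (intro tendsto_sum tendsto_mult tendsto_const chi_tendsto tendsto_of_real vacuum_weight_tendsto assms)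
  moreover have "(\<Sum>j\<in>I. v j * (exp (2 * of_real pi * \<i> * of_real s * of_real (h j - c / 24)) * of_nat (N j 0))
                    * of_real (if j = one then 1 else 0))
      = v one * exp (2 * of_real pi * \<i> * of_real s * of_real (- c / 24))"
    using finite_I one_in_I by (simp add: if_distrib h_one N_one cong: if_cong)
  ultimately show ?thesis
    by simp
qed

lemma chi_shift_ratio_tendsto:
  assumes "a \<in> I"
  shows "((\<lambda>x. chi a (\<i> * of_real x + of_real s) / chi a (\<i> * of_real x))
           \<longlongrightarrow> exp (2 * of_real pi * \<i> * of_real s * of_real (h a - c / 24))) at_top"
proof -
  have N0: "N a 0 \<noteq> 0"
    using N_pos[OF assms] by simp
  then have "((\<lambda>x. (chi a (of_real s + \<i> * of_real x) * of_real (exp (2 * pi * (h a - c / 24) * x)))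
                  / (chi a (of_real 0 + \<i> * of_real x) * of_real (exp (2 * pi * (h a - c / 24) * x))))
      \<longlongrightarrow> (exp (2 * of_real pi * \<i> * of_real s * of_real (h a - c / 24)) * of_nat (N a 0))
          / (exp (2 * of_real pi * \<i> * of_real 0 * of_real (h a - c / 24)) * of_nat (N a 0))) at_top"
    by (intro tendsto_divide chi_tendsto assms filterlim_ident) simp
  then show ?thesis
    using N0 by (simp add: add.commute)
qed

lemma chi_translate_nat:
  assumes "j \<in> I" and "0 < Im \<sigma>"
  shows "chi j (\<sigma> + of_nat m) = exp (2 * of_real pi * \<i> * of_real (h j - c / 24)) ^ m * chi j \<sigma>"
proof (induction m)
  case (Suc m)
  have "chi j (\<sigma> + of_nat (Suc m)) = chi j ((\<sigma> + of_nat m) + 1)"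
    by (simp add: ac_simps)
  also have "\<dots> = exp (2 * of_real pi * \<i> * of_real (h j - c / 24)) * chi j (\<sigma> + of_nat m)"
    using assms by (intro T_trans) auto
  finally show ?case
    using Suc by simp
qed simp

lemma chi_inversion_translate:
  assumes "a \<in> I" and "0 < Im u"
  shows "chi a (- 1 / (- 1 / u + of_nat m))
       = (\<Sum>k\<in>I. (\<Sum>j\<in>I. S a j * exp (2 * of_real pi * \<i> * of_real (h j - c / 24)) ^ m * S j k) * chi k u)"
proof -
  have Im_inv: "0 < Im (- 1 / u)"
    using assms(2) by (simp add: Im_divide complex_eq_iff sum_power2_gt_zero_iff)
  then have "chi a (- 1 / (- 1 / u + of_nat m)) = (\<Sum>j\<in>I. S a j * chi j (- 1 / u + of_nat m))"
    by (intro S_trans assms(1)) simp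
  also have "\<dots> = (\<Sum>j\<in>I. S a j * (exp (2 * of_real pi * \<i> * of_real (h j - c / 24)) ^ m
                                  * (\<Sum>k\<in>I. S j k * chi k u)))"
    by (intro sum.cong refl) (simp only: chi_translate_nat[OF _ Im_inv] S_trans[OF _ assms(2)])
  also have "\<dots> = (\<Sum>j\<in>I. \<Sum>k\<in>I. S a j * exp (2 * of_real pi * \<i> * of_real (h j - c / 24)) ^ m * S j k * chi k u)"
    by (simp add: sum_distrib_left mult.assoc)
  also have "\<dots> = (\<Sum>k\<in>I. \<Sum>j\<in>I. S a j * exp (2 * of_real pi * \<i> * of_real (h j - c / 24)) ^ m * S j k * chi k u)"
    by (rule sum.swap)
  finally show ?thesis
    by (simp add: sum_distrib_right)
qed

lemma chi_imag_axis_eq: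
  assumes "a \<in> I" and "0 < y"
  shows "chi a (\<i> * of_real y) = (\<Sum>j\<in>I. S a j * chi j (of_real 0 + \<i> * of_real (1 / y)))"
proof -
  have "\<i> * of_real y = - 1 / (of_real 0 + \<i> * of_real (1 / y))"
    using assms(2) by (simp add: field_simps)
  then show ?thesis
    using S_trans[OF assms(1), of "of_real 0 + \<i> * of_real (1 / y)"] assms(2) by simp
qed

lemma chi_shifted_imag_axis_eq:
  fixes n :: nat
  assumes "a \<in> I" and "0 < n" and "0 < y"
  shows "chi a (\<i> * of_real y - of_real (1 / real n))
       = (\<Sum>k\<in>I. (\<Sum>j\<in>I. S a j * exp (2 * of_real pi * \<i> * of_real (h j - c / 24)) ^ n * S j k)
                    * chi k (of_real (1 / real n) + \<i> * of_real (1 / (real n ^ 2 * y))))"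
proof -
  have "chi a (\<i> * of_real y - of_real (1 / real n))
      = chi a (- 1 / (- 1 / (of_real (1 / real n) + \<i> * of_real (1 / (real n ^ 2 * y))) + of_nat n))"
    by (simp only: inversion_translate_eq[OF assms(2,3)])
  also have "\<dots> = (\<Sum>k\<in>I. (\<Sum>j\<in>I. S a j * exp (2 * of_real pi * \<i> * of_real (h j - c / 24)) ^ n * S j k)
                    * chi k (of_real (1 / real n) + \<i> * of_real (1 / (real n ^ 2 * y))))"
    using assms(2,3) by (intro chi_inversion_translate assms(1)) simp
  finally show ?thesis .
qed

lemma chi_cusp_ratio_tendsto:
  fixes n :: nat
  assumes "a \<in> I" and "0 < n" and "S a one \<noteq> 0"
    and V_def: "V = (\<Sum>j\<in>I. S a j * exp (2 * of_real pi * \<i> * of_real (h j - c / 24)) ^ n * S j one)"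
  shows "((\<lambda>y. chi a (\<i> * of_real y - of_real (1 / real n)) / chi a (\<i> * of_real y)
                * of_real (exp (2 * pi * (c / 24) * (1 / y - 1 / (real n ^ 2 * y)))))
           \<longlongrightarrow> V * exp (2 * of_real pi * \<i> * of_real (1 / real n) * of_real (- c / 24)) / S a one)
         (at_right 0)"
proof -
  define num where "num y = chi a (\<i> * of_real y - of_real (1 / real n))
      * of_real (exp (- 2 * pi * (c / 24) * (1 / (real n ^ 2 * y))))" for y
  define den where "den y = chi a (\<i> * of_real y) * of_real (exp (- 2 * pi * (c / 24) * (1 / y)))" for y
  have inv: "filterlim (\<lambda>y::real. 1 / y) at_top (at_right 0)"
    using filterlim_inverse_at_top_right by (simp add: inverse_eq_divide)
  then have inv2: "filterlim (\<lambda>y::real. 1 / (real n ^ 2 * y)) at_top (at_right 0)"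
    using filterlim_tendsto_pos_mult_at_top[OF tendsto_const _ inv, of "1 / real n ^ 2"] assms(2) by simp
  have "(num \<longlongrightarrow> V * exp (2 * of_real pi * \<i> * of_real (1 / real n) * of_real (- c / 24))) (at_right 0)"
    unfolding V_def
    by (rule Lim_transform_eventually[OF chi_sum_tendsto[OF inv2]])
      (use eventually_at_right_less[of 0] in eventually_elim,
       simp only: num_def chi_shifted_imag_axis_eq[OF assms(1,2)])
  moreover have "(den \<longlongrightarrow> S a one) (at_right 0)"
    by (rule Lim_transform_eventually[OF chi_sum_tendsto[OF inv, of _ 0], simplified])
      (use eventually_at_right_less[of 0] in eventually_elim, simp add: den_def chi_imag_axis_eq assms(1))
  ultimately have "((\<lambda>y. num y / den y)
      \<longlongrightarrow> V * exp (2 * of_real pi * \<i> * of_real (1 / real n) * of_real (- c / 24)) / S a one) (at_right 0)"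
    using assms(3) by (rule tendsto_divide)
  moreover have "exp (2 * pi * (c / 24) * (1 / y - 1 / (real n ^ 2 * y)))
      = exp (- 2 * pi * (c / 24) * (1 / (real n ^ 2 * y))) / exp (- 2 * pi * (c / 24) * (1 / y))" for y
    by (simp add: exp_diff[symmetric] algebra_simps)
  ultimately show ?thesis
    by (simp only: num_def den_def of_real_divide times_divide_times_eq)
qed

lemma Tfun_rescaled_tendsto:
  fixes n :: nat
  assumes "a \<in> I" and "0 < n" and "S a one \<noteq> 0"
    and "V = (\<Sum>j\<in>I. S a j * exp (2 * of_real pi * \<i> * of_real (h j - c / 24)) ^ n * S j one)"
  shows "((\<lambda>q. exp (2 * pi * (c / 24) * (1 / snd q - 1 / (real n ^ 2 * snd q))) *\<^sub>R Tfun chi a n (fst q) (snd q))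
           \<longlongrightarrow> exp (2 * of_real pi * \<i> * of_real (1 / real n) * of_real (h a - c / 24))
               * (V * exp (2 * of_real pi * \<i> * of_real (1 / real n) * of_real (- c / 24)) / S a one))
         (at_top \<times>\<^sub>F at_right 0)"
proof -
  have x_lim: "((\<lambda>x. chi a (\<i> * of_real x + 1 / of_nat n) / chi a (\<i> * of_real x))
      \<longlongrightarrow> exp (2 * of_real pi * \<i> * of_real (1 / real n) * of_real (h a - c / 24))) at_top"
    using chi_shift_ratio_tendsto[OF assms(1), of "1 / real n"] by simp
  have y_lim: "((\<lambda>y. chi a (\<i> * of_real y - 1 / of_nat n) / chi a (\<i> * of_real y)
                * of_real (exp (2 * pi * (c / 24) * (1 / y - 1 / (real n ^ 2 * y)))))
      \<longlongrightarrow> V * exp (2 * of_real pi * \<i> * of_real (1 / real n) * of_real (- c / 24)) / S a one) (at_right 0)"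
    using chi_cusp_ratio_tendsto[OF assms] by simp
  from tendsto_mult[OF filterlim_compose[OF x_lim filterlim_fst] filterlim_compose[OF y_lim filterlim_snd]]
  show ?thesis
    by (simp add: Tfun_def scaleR_conv_of_real times_divide_times_eq mult_ac)
qed

end

lemma sqrt_sum_squares_pos:
  fixes d :: "'i \<Rightarrow> real"
  assumes "finite I" and "a \<in> I" and "d a \<noteq> 0"
  shows "0 < sqrt (\<Sum>b\<in>I. (d b)\<^sup>2)"
proof -
  have "(d a)\<^sup>2 \<le> (\<Sum>b\<in>I. (d b)\<^sup>2)"
    using assms(1,2) by (intro member_le_sum) auto
  moreover have "0 < (d a)\<^sup>2"
    using assms(3) by simp
  ultimately show ?thesis
    by (intro real_sqrt_gt_zero) linarith
qed

theorem mainTheorem2: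
  fixes I :: "'i set" and one :: 'i and c :: real and h :: "'i \<Rightarrow> real"
    and d :: "'i \<Rightarrow> real" and \<D> :: real and S :: "'i \<Rightarrow> 'i \<Rightarrow> complex"
    and chi :: "'i \<Rightarrow> complex \<Rightarrow> complex" and N :: "'i \<Rightarrow> nat \<Rightarrow> nat"
    and a :: 'i and n :: nat
  assumes finI: "finite I" and oneI: "one \<in> I"
    and h_one: "h one = 0"
    and h_pos: "\<And>b. b \<in> I \<Longrightarrow> b \<noteq> one \<Longrightarrow> h b > 0"
    and d_pos: "\<And>b. b \<in> I \<Longrightarrow> d b > 0"
    and D_def: "\<D> = sqrt (\<Sum>b\<in>I. (d b)\<^sup>2)"
    and S_col1: "\<And>b. b \<in> I \<Longrightarrow> S b one = of_real (d b / \<D>)"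
    and S_row1: "\<And>b. b \<in> I \<Longrightarrow> S one b = of_real (d b / \<D>)"
    and chi_holo: "\<And>b. b \<in> I \<Longrightarrow> chi b holomorphic_on {z. 0 < Im z}"
    and chi_abs: "\<And>b \<tau>. b \<in> I \<Longrightarrow> 0 < Im \<tau> \<Longrightarrow>
        summable (\<lambda>k. norm (of_nat (N b k) *
           exp (2 * of_real pi * \<i> * \<tau> * of_real (h b - c / 24 + real k))))"
    and chi_exp: "\<And>b \<tau>. b \<in> I \<Longrightarrow> 0 < Im \<tau> \<Longrightarrow>
        (\<lambda>k. of_nat (N b k) *
           exp (2 * of_real pi * \<i> * \<tau> * of_real (h b - c / 24 + real k))) sums chi b \<tau>"
    and N0: "\<And>b. b \<in> I \<Longrightarrow> N b 0 \<ge> 1"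
    and N10: "N one 0 = 1"
    and S_trans: "\<And>b \<tau>. b \<in> I \<Longrightarrow> 0 < Im \<tau> \<Longrightarrow>
        chi b (- 1 / \<tau>) = (\<Sum>b'\<in>I. S b b' * chi b' \<tau>)"
    and T_trans: "\<And>b \<tau>. b \<in> I \<Longrightarrow> 0 < Im \<tau> \<Longrightarrow>
        chi b (\<tau> + 1) = exp (2 * of_real pi * \<i> * of_real (h b - c / 24)) * chi b \<tau>"
    and aI: "a \<in> I" and n_pos: "n \<ge> 1"
    and zeta_nz: "zeta I S d h n a \<noteq> 0"
  shows "eventually (\<lambda>(x, y). Tfun chi a n x y \<noteq> 0) (at_top \<times>\<^sub>F at_right 0)
    \<and> ((\<lambda>(x, y). Tfun chi a n x y / of_real (norm (Tfun chi a n x y)))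
        \<longlongrightarrow> exp (2 * of_real pi * \<i> / of_nat n * of_real (h a)
                  - 2 * of_real pi * \<i> * (2 / of_nat n + of_nat n) * of_real (c / 24))
            * (zeta I S d h n a / of_real (norm (zeta I S d h n a))))
       (at_top \<times>\<^sub>F at_right 0)"
proof -
  interpret modular_characters I one c h S chi N
    using finI oneI h_one h_pos chi_abs chi_exp N0 N10 S_trans T_trans by unfold_locales
  have "0 < d a" and "0 < n"
    using d_pos[OF aI] n_pos by auto
  have "0 < \<D>"
    unfolding D_def using finI aI \<open>0 < d a\<close> by (intro sqrt_sum_squares_pos) auto
  define z where "z = zeta I S d h n a"
  define K where "K = exp (2 * of_real pi * \<i> / of_nat n * of_real (h a)
                  - 2 * of_real pi * \<i> * (2 / of_nat n + of_nat n) * of_real (c / 24))"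
  have "exp (2 * of_real pi * \<i> * of_real (1 / real n) * of_real (h a - c / 24))
      * exp (- 2 * of_real pi * \<i> * of_real (c / 24)) ^ n
      * exp (2 * of_real pi * \<i> * of_real (1 / real n) * of_real (- c / 24)) = K"
    unfolding K_def using \<open>0 < n\<close>
    by (simp only: exp_of_nat_mult[symmetric] mult_exp_exp) (rule arg_cong[where f = exp], simp add: field_simps)
  then have limit_eq: "exp (2 * of_real pi * \<i> * of_real (1 / real n) * of_real (h a - c / 24))
      * (exp (- 2 * of_real pi * \<i> * of_real (c / 24)) ^ n / of_real \<D> * zeta I S d h n a
          * exp (2 * of_real pi * \<i> * of_real (1 / real n) * of_real (- c / 24)) / S a one)
      = K * z / of_real (d a)"
    using S_col1[OF aI] \<open>0 < \<D>\<close> by (simp add: z_def field_simps)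
  have "S a one \<noteq> 0"
    using S_col1[OF aI] \<open>0 < d a\<close> \<open>0 < \<D>\<close> by simp
  note lim = Tfun_rescaled_tendsto[OF aI \<open>0 < n\<close> this
      twisted_vacuum_coefficient_eq_zeta[where S = S and d = d, OF S_col1, symmetric], unfolded limit_eq]
  have "norm K = 1"
    unfolding K_def by (simp add: norm_exp_eq_Re)
  moreover have "z \<noteq> 0"
    using zeta_nz by (simp add: z_def)
  ultimately have "K * z / of_real (d a) \<noteq> 0"
    and sgn_limit: "sgn (K * z / of_real (d a)) = K * (z / of_real (norm z))"
    using \<open>0 < d a\<close> by (auto simp: sgn_eq norm_mult norm_divide)
  from tendsto_sgn_of_pos_scaling[OF lim this(1), unfolded sgn_limit] show ?thesis
    unfolding K_def[symmetric] z_def[symmetric] by (simp add: case_prod_beta' sgn_eq)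
qed

end
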